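(* Let $\phi:V\to V$ be a continuous coherency preserver that is not degenerate, with $\phi(0)=0$, $\varphi_0$ nonconstant, and $0$ generic. Then the map $\varphi_0:\mathcal{Q}\to\mathcal{Q}$ is injective.
   Context: Fix an integer $n\ge4$, let $V=\mathbb{R}^n$ with its standard topology and $q(x_1,\dots,x_n)=x_n^2-\sum_{k=1}^{n-1}x_k^2$. Points $x,y$ are coherent when $q(x-y)=0$; $\mathcal{C}(a)=\{m: q(m-a)=0\}$. A coherency preserver is a map $\phi:V\to V$ with $q(b-a)=0\Rightarrow q(\phi(b)-\phi(a))=0$; it is degenerate when its range is included in some $\mathcal{C}(c)$. Let $\mathcal{Q}=\{(x_1,\dots,x_{n-1},1): \sum_{k=1}^{n-1}x_k^2=1\}$. For a non-degenerate continuous coherency preserver $\phi$, for every $a\in V$ and $p\in\mathcal{Q}$ there is a unique $p'\in\mathcal{Q}$ with $\phi(a+\mathbb{R}p)\subset\phi(a)+\mathbb{R}p'$; one sets $\varphi_a(p):=p'$. Let $\mathcal{W}$ be the set of points $b\in V$ such that $\phi^{-1}(\{b\})$ has nonempty interior in $V$; a point $a$ is generic if $\phi(a)\notin\mathcal{W}$. *)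

theory Defs
  imports "HOL-Analysis.Analysis"
begin

text \<open>V = real^'n; the index t plays the role of the last ("time") coordinate x_n.\<close>

definition lq :: "'n::finite \<Rightarrow> real^'n \<Rightarrow> real" where
  "lq t x = (x $ t)^2 - (\<Sum>i\<in>UNIV - {t}. (x $ i)^2)"

definition coherent :: "'n::finite \<Rightarrow> real^'n \<Rightarrow> real^'n \<Rightarrow> bool" where
  "coherent t x y \<longleftrightarrow> lq t (x - y) = 0"

definition lcone :: "'n::finite \<Rightarrow> real^'n \<Rightarrow> (real^'n) set" where
  "lcone t a = {m. lq t (m - a) = 0}"

definition coherency_preserver :: "'n::finite \<Rightarrow> (real^'n \<Rightarrow> real^'n) \<Rightarrow> bool" where
  "coherency_preserver t \<phi> \<longleftrightarrow>
     (\<forall>a b. lq t (b - a) = 0 \<longrightarrow> lq t (\<phi> b - \<phi> a) = 0)"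

definition degenerate :: "'n::finite \<Rightarrow> (real^'n \<Rightarrow> real^'n) \<Rightarrow> bool" where
  "degenerate t \<phi> \<longleftrightarrow> (\<exists>c. range \<phi> \<subseteq> lcone t c)"

definition Qset :: "'n::finite \<Rightarrow> (real^'n) set" where
  "Qset t = {x. x $ t = 1 \<and> (\<Sum>i\<in>UNIV - {t}. (x $ i)^2) = 1}"

definition varphi :: "'n::finite \<Rightarrow> (real^'n \<Rightarrow> real^'n) \<Rightarrow> real^'n \<Rightarrow> real^'n \<Rightarrow> real^'n" where
  "varphi t \<phi> a p = (THE p'. p' \<in> Qset t \<and>
      \<phi> ` {a + s *\<^sub>R p | s. True} \<subseteq> {\<phi> a + s *\<^sub>R p' | s. True})"

definition Wset :: "(real^'n::finite \<Rightarrow> real^'n) \<Rightarrow> (real^'n) set" where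
  "Wset \<phi> = {b. interior (\<phi> -` {b}) \<noteq> {}}"

definition generic :: "(real^'n::finite \<Rightarrow> real^'n) \<Rightarrow> real^'n \<Rightarrow> bool" where
  "generic \<phi> a \<longleftrightarrow> \<phi> a \<notin> Wset \<phi>"

end

theory Submission
  imports Defs
begin

text \<open>
  Suppose \<open>\<phi>\<close> maps two distinct light rays \<open>\<real>p\<close>, \<open>\<real>p'\<close> into the same light ray \<open>\<real>r\<close>, while some
  third ray \<open>\<real>q\<close> goes into a different light ray \<open>\<real>r'\<close>. A point \<open>w\<close> with
  \<open>lpolar t w x \<noteq> 0\<close> is coherent with exactly one point \<open>\<sigma>x\<close> of the ray \<open>\<real>x\<close>, and in dimension
  \<open>n \<ge> 4\<close> the three parameters \<open>\<sigma>\<close> belonging to \<open>p, p', q\<close> can be prescribed freely.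
  Choosing them so that \<open>\<phi>(\<sigma>\<^sub>1p) \<noteq> \<phi>(\<sigma>\<^sub>2p')\<close> and \<open>\<phi>(\<sigma>\<^sub>3q) \<noteq> 0\<close>, the image \<open>\<phi>(w)\<close> is coherent with
  two distinct points of \<open>\<real>r\<close>, hence lies on \<open>\<real>r\<close>, and with a nonzero point of \<open>\<real>r'\<close>, hence is
  \<open>0\<close>. By continuity this persists on a neighbourhood of \<open>w\<close>, so \<open>\<phi>\<^sup>-\<^sup>1{\<phi>(0)}\<close> has interior
  points, contradicting genericity of \<open>0\<close>.
\<close>

definition lpolar :: "'n::finite \<Rightarrow> real^'n \<Rightarrow> real^'n \<Rightarrow> real" where
  "lpolar t x y = x$t * y$t - (\<Sum>i\<in>UNIV - {t}. x$i * y$i)"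

lemma lq_eq_lpolar: "lq t x = lpolar t x x"
  by (simp add: lq_def lpolar_def power2_eq_square)

lemma lpolar_commute: "lpolar t x y = lpolar t y x"
  by (simp add: lpolar_def mult.commute)

lemma lpolar_add_left: "lpolar t (x + y) z = lpolar t x z + lpolar t y z"
  by (simp add: lpolar_def algebra_simps sum.distrib)

lemma lpolar_diff_left: "lpolar t (x - y) z = lpolar t x z - lpolar t y z"
  by (simp add: lpolar_def algebra_simps sum_subtractf)

lemma lpolar_scaleR_left: "lpolar t (a *\<^sub>R x) z = a * lpolar t x z"
  by (simp add: lpolar_def algebra_simps sum_distrib_left)

lemma lpolar_add_right: "lpolar t z (x + y) = lpolar t z x + lpolar t z y"
  by (metis lpolar_add_left lpolar_commute)

lemma lpolar_diff_right: "lpolar t z (x - y) = lpolar t z x - lpolar t z y"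
  by (metis lpolar_diff_left lpolar_commute)

lemma lpolar_scaleR_right: "lpolar t z (a *\<^sub>R x) = a * lpolar t z x"
  by (metis lpolar_scaleR_left lpolar_commute)

lemmas lpolar_linear =
  lpolar_add_left lpolar_diff_left lpolar_scaleR_left
  lpolar_add_right lpolar_diff_right lpolar_scaleR_right

lemma lpolar_eq_inner: "lpolar t x y = x \<bullet> (\<chi> i. if i = t then y$i else - y$i)"
  by (simp add: lpolar_def inner_vec_def sum.remove[of UNIV t] sum_negf)

lemma continuous_on_lpolar: "continuous_on S (\<lambda>x. lpolar t x y)"
  unfolding lpolar_def by (intro continuous_intros)

lemma continuous_on_lq: "continuous_on S (lq t)"
  unfolding lq_def by (intro continuous_intros)

lemma lq_diff: "lq t (x - y) = lq t x - 2 * lpolar t x y + lq t y"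
  by (simp add: lq_eq_lpolar lpolar_linear lpolar_commute[of t y x])

lemma lq_add: "lq t (x + y) = lq t x + 2 * lpolar t x y + lq t y"
  by (simp add: lq_eq_lpolar lpolar_linear lpolar_commute[of t y x])

lemma lq_scaleR: "lq t (a *\<^sub>R x) = a\<^sup>2 * lq t x"
  by (simp add: lq_eq_lpolar lpolar_linear power2_eq_square)

lemma lightlike_time_eq_0_imp_eq_0:
  assumes "lq t u = 0" "u$t = 0"
  shows "u = 0"
proof -
  have "(\<Sum>i\<in>UNIV - {t}. (u$i)\<^sup>2) = 0"
    using assms by (simp add: lq_def)
  then have "\<forall>i\<in>UNIV - {t}. u$i = 0"
    by (subst (asm) sum_nonneg_eq_0_iff) auto
  then show ?thesis
    using assms(2) by (metis DiffI singletonD vec_eq_iff zero_index UNIV_I)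
qed

lemma Qset_time: "p \<in> Qset t \<Longrightarrow> p$t = 1"
  by (simp add: Qset_def)

lemma lq_Qset: "p \<in> Qset t \<Longrightarrow> lq t p = 0"
  by (simp add: Qset_def lq_def)

lemma lpolar_Qset_self: "p \<in> Qset t \<Longrightarrow> lpolar t p p = 0"
  by (metis lq_Qset lq_eq_lpolar)

lemma lightlike_div_time_in_Qset:
  assumes "lq t u = 0" "u$t \<noteq> 0"
  shows "(1 / u$t) *\<^sub>R u \<in> Qset t"
proof -
  have "(\<Sum>i\<in>UNIV - {t}. (u$i)\<^sup>2) = (u$t)\<^sup>2"
    using assms(1) by (simp add: lq_def)
  then have "(\<Sum>i\<in>UNIV - {t}. (u$i / u$t)\<^sup>2) = 1"
    using assms(2) by (simp add: power_divide flip: sum_divide_distrib)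
  then show ?thesis
    using assms(2) by (simp add: Qset_def)
qed

lemma minus_lq_orthogonal_Qset:
  assumes "p \<in> Qset t" "lpolar t v p = 0"
  shows "- lq t v = (\<Sum>i\<in>UNIV - {t}. (v$i - v$t * p$i)\<^sup>2)"
proof -
  have vp: "(\<Sum>i\<in>UNIV - {t}. v$i * p$i) = v$t"
    and pp: "(\<Sum>i\<in>UNIV - {t}. (p$i)\<^sup>2) = 1"
    using assms by (simp_all add: lpolar_def Qset_def)
  have "(\<Sum>i\<in>UNIV - {t}. (v$i - v$t * p$i)\<^sup>2)
      = (\<Sum>i\<in>UNIV - {t}. (v$i)\<^sup>2 - 2 * v$t * (v$i * p$i) + (v$t)\<^sup>2 * (p$i)\<^sup>2)"
    by (rule sum.cong) (auto simp: power2_eq_square algebra_simps)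
  also have "\<dots> = (\<Sum>i\<in>UNIV - {t}. (v$i)\<^sup>2) - 2 * v$t * (\<Sum>i\<in>UNIV - {t}. v$i * p$i)
       + (v$t)\<^sup>2 * (\<Sum>i\<in>UNIV - {t}. (p$i)\<^sup>2)"
    by (simp add: sum.distrib sum_subtractf sum_distrib_left)
  also have "\<dots> = (\<Sum>i\<in>UNIV - {t}. (v$i)\<^sup>2) - (v$t)\<^sup>2"
    using vp pp by (simp add: power2_eq_square)
  finally show ?thesis
    by (simp add: lq_def)
qed

lemma lightlike_orthogonal_Qset:
  assumes "p \<in> Qset t" "lpolar t v p = 0" "lq t v = 0"
  shows "v = v$t *\<^sub>R p"
proof -
  have "(\<Sum>i\<in>UNIV - {t}. (v$i - v$t * p$i)\<^sup>2) = 0"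
    using minus_lq_orthogonal_Qset[OF assms(1,2)] assms(3) by simp
  then have "\<forall>i\<in>UNIV - {t}. v$i = v$t * p$i"
    by (subst (asm) sum_nonneg_eq_0_iff) auto
  then show ?thesis
    using Qset_time[OF assms(1)] by (auto simp: vec_eq_iff)
qed

lemma lq_orthogonal_two_Qset_neg:
  assumes "p \<in> Qset t" "p' \<in> Qset t" "p \<noteq> p'"
    and "lpolar t v p = 0" "lpolar t v p' = 0" "v \<noteq> 0"
  shows "lq t v < 0"
proof -
  have "0 \<le> (\<Sum>i\<in>UNIV - {t}. (v$i - v$t * p$i)\<^sup>2)"
    by (intro sum_nonneg) simp
  then have "lq t v \<le> 0"
    using minus_lq_orthogonal_Qset[OF assms(1,4)] by linarith
  moreover have "lq t v \<noteq> 0"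
  proof
    assume "lq t v = 0"
    then have "v = v$t *\<^sub>R p" "v = v$t *\<^sub>R p'"
      using lightlike_orthogonal_Qset assms by blast+
    then show False
      using assms(3,6) by (metis scaleR_cancel_left scale_zero_left)
  qed
  ultimately show ?thesis
    by simp
qed

lemma lpolar_Qset_pos:
  assumes "p \<in> Qset t" "r \<in> Qset t" "p \<noteq> r"
  shows "lpolar t p r > 0"
proof -
  have "(\<Sum>i\<in>UNIV - {t}. (p$i - r$i)\<^sup>2)
      = (\<Sum>i\<in>UNIV - {t}. (p$i)\<^sup>2 + (r$i)\<^sup>2 - 2 * (p$i * r$i))"
    by (rule sum.cong) (auto simp: power2_eq_square algebra_simps)
  also have "\<dots> = 2 * lpolar t p r"
    using assms by (simp add: sum.distrib sum_subtractf sum_distrib_left Qset_def lpolar_def)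
  finally have sq: "(\<Sum>i\<in>UNIV - {t}. (p$i - r$i)\<^sup>2) = 2 * lpolar t p r" .
  have "lpolar t p r \<noteq> 0"
  proof
    assume "lpolar t p r = 0"
    then have "(\<Sum>i\<in>UNIV - {t}. (p$i - r$i)\<^sup>2) = 0"
      using sq by simp
    then have "\<forall>i\<in>UNIV - {t}. p$i = r$i"
      by (subst (asm) sum_nonneg_eq_0_iff) auto
    then have "p = r"
      using Qset_time[OF assms(1)] Qset_time[OF assms(2)] by (auto simp: vec_eq_iff)
    then show False
      using assms(3) by simp
  qed
  moreover have "0 \<le> (\<Sum>i\<in>UNIV - {t}. (p$i - r$i)\<^sup>2)"
    by (intro sum_nonneg) simp
  then have "lpolar t p r \<ge> 0"
    using sq by linarith
  ultimately show ?thesis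
    by simp
qed

lemma coherent_two_ray_points_imp_on_ray:
  assumes "r \<in> Qset t" "lq t (z - a *\<^sub>R r) = 0" "lq t (z - b *\<^sub>R r) = 0" "a \<noteq> b"
  shows "z = z$t *\<^sub>R r"
proof -
  have "lq t z - 2 * a * lpolar t z r = 0" "lq t z - 2 * b * lpolar t z r = 0"
    using assms(2,3) by (simp_all add: lq_diff lq_scaleR lq_Qset[OF assms(1)] lpolar_linear)
  then have "lpolar t z r = 0" "lq t z = 0"
    using assms(4) by auto
  then show ?thesis
    using lightlike_orthogonal_Qset[OF assms(1)] by simp
qed

lemma coherent_two_rays_imp_eq_0:
  assumes "r \<in> Qset t" "r' \<in> Qset t" "r \<noteq> r'"
    and "lq t (z - a *\<^sub>R r) = 0" "lq t (z - b *\<^sub>R r) = 0" "a \<noteq> b"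
    and "lq t (z - c *\<^sub>R r') = 0" "c \<noteq> 0"
  shows "z = 0"
proof -
  have z: "z = z$t *\<^sub>R r"
    using coherent_two_ray_points_imp_on_ray assms(1,4-6) .
  have "lq t (z$t *\<^sub>R r - c *\<^sub>R r') = 0"
    using assms(7) z by simp
  then have "z$t = 0"
    using lpolar_Qset_pos[OF assms(1-3)] assms(8)
    by (simp add: lq_diff lq_scaleR lq_Qset assms(1,2) lpolar_linear)
  then show ?thesis
    using z by simp
qed

text \<open>For \<open>lpolar t w x \<noteq> 0\<close>, \<open>cone_param t w x *\<^sub>R x\<close> is the unique point of the ray \<open>\<real>x\<close>
  coherent with \<open>w\<close>.\<close>

definition cone_param :: "'n::finite \<Rightarrow> real^'n \<Rightarrow> real^'n \<Rightarrow> real" where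
  "cone_param t w x = lq t w / (2 * lpolar t w x)"

lemma coherent_cone_param:
  assumes "x \<in> Qset t" "lpolar t w x \<noteq> 0"
  shows "lq t (w - cone_param t w x *\<^sub>R x) = 0"
  using assms by (simp add: cone_param_def lq_diff lq_scaleR lq_Qset lpolar_linear)

lemma continuous_on_cone_param: "continuous_on {w. lpolar t w x \<noteq> 0} (\<lambda>w. cone_param t w x)"
  unfolding cone_param_def
  by (intro continuous_intros continuous_on_lq continuous_on_lpolar) auto

lemma closure_lpolar_neq_0:
  fixes x :: "real^'n::finite"
  assumes "x \<in> Qset t"
  shows "closure {w. lpolar t w x \<noteq> 0} = UNIV"
proof -
  define x' :: "real^'n" where "x' = (\<chi> i. if i = t then x$i else - x$i)"
  have "x'$t \<noteq> 0"
    using Qset_time[OF assms] by (simp add: x'_def)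
  then have "x' \<noteq> 0"
    by auto
  moreover have "{w. lpolar t w x \<noteq> 0} = - {w. x' \<bullet> w = 0}"
    by (auto simp: lpolar_eq_inner x'_def inner_commute)
  ultimately show ?thesis
    by (simp add: closure_complement)
qed

lemma lightlike_ray_image:
  assumes cp: "coherency_preserver t \<phi>" and "\<phi> 0 = 0" and q: "q \<in> Qset t"
    and "\<phi> (s0 *\<^sub>R q) \<noteq> 0"
  obtains r where "r \<in> Qset t" "\<And>s. \<phi> (s *\<^sub>R q) = (\<phi> (s *\<^sub>R q))$t *\<^sub>R r"
proof -
  have coh: "lq t (\<phi> (s *\<^sub>R q) - \<phi> (s' *\<^sub>R q)) = 0" for s s'
    using cp by (simp add: coherency_preserver_def lq_scaleR lq_Qset[OF q] flip: scaleR_diff_left)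
  define u where "u = \<phi> (s0 *\<^sub>R q)"
  have "lq t u = 0"
    using coh[of s0 0] \<open>\<phi> 0 = 0\<close> by (simp add: u_def)
  moreover have ut: "u$t \<noteq> 0"
    using lightlike_time_eq_0_imp_eq_0 \<open>lq t u = 0\<close> assms(4) u_def by blast
  ultimately have rQ: "(1 / u$t) *\<^sub>R u \<in> Qset t"
    by (rule lightlike_div_time_in_Qset)
  have "\<phi> (s *\<^sub>R q) = (\<phi> (s *\<^sub>R q))$t *\<^sub>R ((1 / u$t) *\<^sub>R u)" for s
  proof (rule coherent_two_ray_points_imp_on_ray[OF rQ])
    show "lq t (\<phi> (s *\<^sub>R q) - 0 *\<^sub>R ((1 / u$t) *\<^sub>R u)) = 0"
      using coh[of s 0] \<open>\<phi> 0 = 0\<close> by simp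
    show "lq t (\<phi> (s *\<^sub>R q) - u$t *\<^sub>R ((1 / u$t) *\<^sub>R u)) = 0"
      using coh[of s s0] ut by (simp add: u_def)
  qed (use ut in simp)
  then show ?thesis
    using rQ that by blast
qed

lemma varphi_0_eqI:
  assumes "\<phi> 0 = 0" "r \<in> Qset t" "\<And>s. \<phi> (s *\<^sub>R q) = (\<phi> (s *\<^sub>R q))$t *\<^sub>R r"
    and "\<phi> (s0 *\<^sub>R q) \<noteq> 0"
  shows "varphi t \<phi> 0 q = r"
  unfolding varphi_def
proof (rule the_equality)
  show "r \<in> Qset t \<and> \<phi> ` {0 + s *\<^sub>R q |s. True} \<subseteq> {\<phi> 0 + s *\<^sub>R r |s. True}"
    using assms(1-3) by auto
next
  fix r' assume r': "r' \<in> Qset t \<and> \<phi> ` {0 + s *\<^sub>R q |s. True} \<subseteq> {\<phi> 0 + s *\<^sub>R r' |s. True}"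
  then obtain c where c: "\<phi> (s0 *\<^sub>R q) = c *\<^sub>R r'"
    using assms(1) by auto
  then have "(\<phi> (s0 *\<^sub>R q))$t = c"
    using Qset_time r' by force
  then show "r' = r"
    using assms(3)[of s0] assms(4) c by (metis scaleR_cancel_left scale_zero_left)
qed

text \<open>If some light ray through \<open>a\<close> is collapsed to \<open>\<phi> a\<close>, then every point coherent with a point
  of that ray is mapped into the light cone of \<open>\<phi> a\<close>; these points are dense.\<close>

lemma ray_collapse_imp_degenerate:
  assumes cp: "coherency_preserver t \<phi>" and cont: "continuous_on UNIV \<phi>" and q: "q \<in> Qset t"
    and collapse: "\<And>s. \<phi> (a + s *\<^sub>R q) = \<phi> a"
  shows "degenerate t \<phi>"
proof -
  have "lq t (\<phi> w - \<phi> a) = 0" if "lpolar t (w - a) q \<noteq> 0" for w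
  proof -
    have "lq t (w - (a + cone_param t (w - a) q *\<^sub>R q)) = 0"
      using coherent_cone_param[OF q that] by (simp add: diff_diff_eq)
    then have "lq t (\<phi> w - \<phi> (a + cone_param t (w - a) q *\<^sub>R q)) = 0"
      using cp unfolding coherency_preserver_def by blast
    then show ?thesis
      by (simp only: collapse)
  qed
  then have "lq t (\<phi> w - \<phi> a) = 0" if "w \<in> (+) a ` {v. lpolar t v q \<noteq> 0}" for w
    using that by auto
  moreover have "closure ((+) a ` {v. lpolar t v q \<noteq> 0}) = UNIV"
    using closure_lpolar_neq_0[OF q] by (simp add: closure_translation)
  moreover have "continuous_on UNIV (\<lambda>w. lq t (\<phi> w - \<phi> a))"
    by (intro continuous_on_compose2[OF continuous_on_lq] continuous_intros cont) auto
  ultimately have "lq t (\<phi> w - \<phi> a) = 0" for w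
    using continuous_constant_on_closure
        [of "(+) a ` {v. lpolar t v q \<noteq> 0}" "\<lambda>w. lq t (\<phi> w - \<phi> a)" 0 w]
    by simp
  then show ?thesis
    unfolding degenerate_def lcone_def by blast
qed

lemma nondegenerate_varphi_0_ray:
  assumes cp: "coherency_preserver t \<phi>" and cont: "continuous_on UNIV \<phi>"
    and nd: "\<not> degenerate t \<phi>" and "\<phi> 0 = 0" and q: "q \<in> Qset t"
  shows "varphi t \<phi> 0 q \<in> Qset t"
    and "\<phi> (s *\<^sub>R q) = (\<phi> (s *\<^sub>R q))$t *\<^sub>R varphi t \<phi> 0 q"
    and "\<exists>s. (\<phi> (s *\<^sub>R q))$t \<noteq> 0"
proof -
  obtain s0 where s0: "\<phi> (s0 *\<^sub>R q) \<noteq> 0"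
    using ray_collapse_imp_degenerate[OF cp cont q, of 0] nd \<open>\<phi> 0 = 0\<close> by auto
  obtain r where r: "r \<in> Qset t" "\<And>s. \<phi> (s *\<^sub>R q) = (\<phi> (s *\<^sub>R q))$t *\<^sub>R r"
    using lightlike_ray_image[OF cp \<open>\<phi> 0 = 0\<close> q s0] by blast
  have "varphi t \<phi> 0 q = r"
    using varphi_0_eqI[OF \<open>\<phi> 0 = 0\<close> r s0] .
  then show "varphi t \<phi> 0 q \<in> Qset t" "\<phi> (s *\<^sub>R q) = (\<phi> (s *\<^sub>R q))$t *\<^sub>R varphi t \<phi> 0 q"
    using r by simp_all
  show "\<exists>s. (\<phi> (s *\<^sub>R q))$t \<noteq> 0"
    using r(2)[of s0] s0 by (metis scale_zero_left)
qed

lemma exists_lpolar_orthogonal3: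
  fixes a b c :: "real^'n::finite"
  assumes "CARD('n) \<ge> 4"
  obtains v where "v \<noteq> 0" "lpolar t v a = 0" "lpolar t v b = 0" "lpolar t v c = 0"
proof -
  define L where "L = (\<lambda>v::real^'n. (lpolar t v a, lpolar t v b, lpolar t v c))"
  have lin: "linear L"
    by (rule linearI) (simp_all add: L_def lpolar_linear)
  have "\<not> inj L"
  proof
    assume "inj L"
    then have "dim (range L) = CARD('n)"
      using dim_image_eq[OF lin, of UNIV] by (simp add: dim_UNIV inj_on_def)
    moreover have "dim (range L) \<le> DIM(real \<times> real \<times> real)"
      using dim_subset_UNIV by blast
    ultimately show False
      using assms by simp
  qed
  then obtain v where "v \<noteq> 0" "L v = 0"
    using linear_injective_0[OF lin] by blast
  then show ?thesis
    using that by (simp add: L_def zero_prod_def)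
qed

text \<open>The Gram matrix of three distinct points of \<open>Q\<close> has zero diagonal and positive off-diagonal
  entries, so it is invertible; the coefficients below come from inverting it.\<close>

lemma exists_lpolar_values_Qset3:
  assumes Q: "p \<in> Qset t" "p' \<in> Qset t" "q \<in> Qset t"
    and d: "p \<noteq> p'" "p \<noteq> q" "p' \<noteq> q"
  obtains \<alpha> \<beta> \<gamma> where
    "lpolar t (\<alpha> *\<^sub>R p + \<beta> *\<^sub>R p' + \<gamma> *\<^sub>R q) p = c1"
    "lpolar t (\<alpha> *\<^sub>R p + \<beta> *\<^sub>R p' + \<gamma> *\<^sub>R q) p' = c2"
    "lpolar t (\<alpha> *\<^sub>R p + \<beta> *\<^sub>R p' + \<gamma> *\<^sub>R q) q = c3"
proof -
  define k12 where "k12 = lpolar t p p'"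
  define k13 where "k13 = lpolar t p q"
  define k23 where "k23 = lpolar t p' q"
  have k: "k12 > 0" "k13 > 0" "k23 > 0"
    using lpolar_Qset_pos Q d unfolding k12_def k13_def k23_def by auto
  have sym: "lpolar t p' p = k12" "lpolar t q p = k13" "lpolar t q p' = k23"
    by (simp_all add: k12_def k13_def k23_def lpolar_commute)
  have diag: "lpolar t p p = 0" "lpolar t p' p' = 0" "lpolar t q q = 0"
    using Q lpolar_Qset_self by auto
  define \<gamma> where "\<gamma> = (k13 * c2 + k23 * c1 - k12 * c3) / (2 * k13 * k23)"
  define \<alpha> where "\<alpha> = (c2 - \<gamma> * k23) / k12"
  define \<beta> where "\<beta> = (c1 - \<gamma> * k13) / k12"
  have "lpolar t (\<alpha> *\<^sub>R p + \<beta> *\<^sub>R p' + \<gamma> *\<^sub>R q) p = c1"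
    using k by (simp add: lpolar_linear sym diag \<beta>_def field_simps)
  moreover have "lpolar t (\<alpha> *\<^sub>R p + \<beta> *\<^sub>R p' + \<gamma> *\<^sub>R q) p' = c2"
    using k by (simp add: lpolar_linear sym diag \<alpha>_def k12_def[symmetric] field_simps)
  moreover have "lpolar t (\<alpha> *\<^sub>R p + \<beta> *\<^sub>R p' + \<gamma> *\<^sub>R q) q = \<alpha> * k13 + \<beta> * k23"
    by (simp add: lpolar_linear diag k13_def k23_def)
  moreover have "\<alpha> * k13 + \<beta> * k23 = c3"
    using k by (simp add: \<alpha>_def \<beta>_def \<gamma>_def field_simps)
  ultimately show ?thesis
    using that by simp
qed

text \<open>Take \<open>w = \<rho> w\<^sub>0 + \<mu> v\<close>, where \<open>w\<^sub>0\<close> has \<open>lpolar t w\<^sub>0 x = 1 / (2\<sigma>\<^sub>x)\<close> and \<open>v\<close> is a unit spacelike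
  vector orthogonal to \<open>p, p', q\<close>; then \<open>cone_param t w x = lq t w \<sigma>\<^sub>x / \<rho>\<close>, and \<open>\<rho>, \<mu>\<close> are
  chosen with \<open>lq t w = \<rho>\<^sup>2 lq t w\<^sub>0 - \<mu>\<^sup>2 = \<rho> \<noteq> 0\<close>.\<close>

lemma exists_cone_params:
  fixes p p' q :: "real^'n::finite"
  assumes card: "CARD('n) \<ge> 4" and Q: "p \<in> Qset t" "p' \<in> Qset t" "q \<in> Qset t"
    and d: "p \<noteq> p'" "p \<noteq> q" "p' \<noteq> q"
    and \<sigma>: "\<sigma>1 \<noteq> 0" "\<sigma>2 \<noteq> 0" "\<sigma>3 \<noteq> 0"
  obtains w where "lpolar t w p \<noteq> 0" "lpolar t w p' \<noteq> 0" "lpolar t w q \<noteq> 0"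
    "cone_param t w p = \<sigma>1" "cone_param t w p' = \<sigma>2" "cone_param t w q = \<sigma>3"
proof -
  obtain \<alpha> \<beta> \<gamma> where w0:
    "lpolar t (\<alpha> *\<^sub>R p + \<beta> *\<^sub>R p' + \<gamma> *\<^sub>R q) p = 1 / (2 * \<sigma>1)"
    "lpolar t (\<alpha> *\<^sub>R p + \<beta> *\<^sub>R p' + \<gamma> *\<^sub>R q) p' = 1 / (2 * \<sigma>2)"
    "lpolar t (\<alpha> *\<^sub>R p + \<beta> *\<^sub>R p' + \<gamma> *\<^sub>R q) q = 1 / (2 * \<sigma>3)"
    using exists_lpolar_values_Qset3[OF Q d] by blast
  define w0 where "w0 = \<alpha> *\<^sub>R p + \<beta> *\<^sub>R p' + \<gamma> *\<^sub>R q"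
  obtain v where v: "v \<noteq> 0" "lpolar t v p = 0" "lpolar t v p' = 0" "lpolar t v q = 0"
    using exists_lpolar_orthogonal3[OF card] by blast
  have "lq t v < 0"
    using lq_orthogonal_two_Qset_neg[OF Q(1,2) d(1) v(2,3,1)] .
  define v1 where "v1 = (1 / sqrt (- lq t v)) *\<^sub>R v"
  have lq_v1: "lq t v1 = -1"
    using \<open>lq t v < 0\<close> by (simp add: v1_def lq_scaleR power_divide)
  have v1: "lpolar t v1 p = 0" "lpolar t v1 p' = 0" "lpolar t v1 q = 0"
    using v by (simp_all add: v1_def lpolar_linear)
  then have w0_v1: "lpolar t w0 v1 = 0"
    by (simp add: w0_def lpolar_linear lpolar_commute[of t _ v1])
  define \<rho> where "\<rho> = - 1 / (1 + \<bar>lq t w0\<bar>)"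
  have "\<rho> < 0" "\<rho> * lq t w0 \<le> 1"
    by (auto simp: \<rho>_def field_simps abs_if)
  then have "\<rho>\<^sup>2 * lq t w0 - \<rho> \<ge> 0"
    by (simp add: power2_eq_square mult_nonpos_nonpos algebra_simps)
  define \<mu> where "\<mu> = sqrt (\<rho>\<^sup>2 * lq t w0 - \<rho>)"
  define w where "w = \<rho> *\<^sub>R w0 + \<mu> *\<^sub>R v1"
  have lq_w: "lq t w = \<rho>"
    using \<open>\<rho>\<^sup>2 * lq t w0 - \<rho> \<ge> 0\<close>
    by (simp add: w_def \<mu>_def lq_add lq_scaleR lpolar_linear w0_v1 lq_v1)
  have "lpolar t w p = \<rho> / (2 * \<sigma>1)" "lpolar t w p' = \<rho> / (2 * \<sigma>2)" "lpolar t w q = \<rho> / (2 * \<sigma>3)"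
    using w0 v1 by (simp_all add: w_def w0_def lpolar_linear)
  then show ?thesis
    using \<sigma> \<open>\<rho> < 0\<close> by (intro that[of w]) (simp_all add: cone_param_def lq_w)
qed

lemma exists_neq_0_neq_value:
  fixes g :: "real \<Rightarrow> real"
  assumes "continuous_on UNIV g" "g 0 \<noteq> c"
  obtains s where "s \<noteq> 0" "g s \<noteq> c"
proof -
  have "closure (- {0::real}) = UNIV"
    by (simp add: closure_complement)
  then show ?thesis
    using continuous_constant_on_closure[of "- {0}" g c 0] assms that by auto
qed

lemma interior_zero_fiber_nonempty:
  assumes card: "CARD('n::finite) \<ge> 4" and cp: "coherency_preserver t \<phi>"
    and Q: "p \<in> Qset t" "p' \<in> Qset t" "q \<in> Qset t" and d: "p \<noteq> p'" "p \<noteq> q" "p' \<noteq> q"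
    and R: "r \<in> Qset t" "r' \<in> Qset t" "r \<noteq> r'"
    and cont: "continuous_on UNIV f" "continuous_on UNIV g" "continuous_on UNIV h"
    and zero: "f 0 = 0" "g 0 = 0" "h 0 = 0"
    and rays: "\<And>s. \<phi> (s *\<^sub>R p) = f s *\<^sub>R r" "\<And>s. \<phi> (s *\<^sub>R p') = g s *\<^sub>R r"
      "\<And>s. \<phi> (s *\<^sub>R q) = h s *\<^sub>R r'"
    and "f \<sigma>1 \<noteq> 0" "h \<sigma>3 \<noteq> 0"
  shows "interior (\<phi> -` {0 :: real^'n}) \<noteq> {}"
proof -
  obtain \<sigma>2 where "\<sigma>2 \<noteq> 0" "g \<sigma>2 \<noteq> f \<sigma>1"
    using exists_neq_0_neq_value[OF cont(2)] zero(2) \<open>f \<sigma>1 \<noteq> 0\<close> by metis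
  moreover have "\<sigma>1 \<noteq> 0" "\<sigma>3 \<noteq> 0"
    using zero \<open>f \<sigma>1 \<noteq> 0\<close> \<open>h \<sigma>3 \<noteq> 0\<close> by auto
  ultimately obtain w where
    "lpolar t w p \<noteq> 0" "lpolar t w p' \<noteq> 0" "lpolar t w q \<noteq> 0"
    "cone_param t w p = \<sigma>1" "cone_param t w p' = \<sigma>2" "cone_param t w q = \<sigma>3"
    using exists_cone_params[OF card Q d] by metis
  define A where "A = {w. lpolar t w p \<noteq> 0 \<and> lpolar t w p' \<noteq> 0 \<and> lpolar t w q \<noteq> 0}"
  define G where "G w = (f (cone_param t w p) - g (cone_param t w p')) * h (cone_param t w q)" for w
  define U where "U = A \<inter> G -` (- {0})"
  have "open A"
    unfolding A_def
    by (intro open_Collect_conj open_Collect_neq continuous_on_lpolar continuous_intros)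
  moreover have "continuous_on A G"
    unfolding G_def A_def
    by (intro continuous_intros continuous_on_compose2[OF cont(1)] continuous_on_compose2[OF cont(2)]
        continuous_on_compose2[OF cont(3)] continuous_on_subset[OF continuous_on_cone_param]) auto
  ultimately have "open U"
    unfolding U_def by (intro continuous_open_preimage) auto
  moreover have "w \<in> U"
    using \<open>g \<sigma>2 \<noteq> f \<sigma>1\<close> \<open>h \<sigma>3 \<noteq> 0\<close> \<open>lpolar t w p \<noteq> 0\<close> \<open>lpolar t w p' \<noteq> 0\<close> \<open>lpolar t w q \<noteq> 0\<close>
      \<open>cone_param t w p = \<sigma>1\<close> \<open>cone_param t w p' = \<sigma>2\<close> \<open>cone_param t w q = \<sigma>3\<close>
    by (simp add: U_def A_def G_def)
  moreover have "U \<subseteq> \<phi> -` {0}"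
  proof
    fix u assume "u \<in> U"
    then have u: "lpolar t u p \<noteq> 0" "lpolar t u p' \<noteq> 0" "lpolar t u q \<noteq> 0" "G u \<noteq> 0"
      by (auto simp: U_def A_def)
    have "lq t (\<phi> u - \<phi> (cone_param t u x *\<^sub>R x)) = 0" if "x \<in> Qset t" "lpolar t u x \<noteq> 0" for x
      using cp coherent_cone_param[OF that] unfolding coherency_preserver_def by blast
    then have "lq t (\<phi> u - f (cone_param t u p) *\<^sub>R r) = 0"
      "lq t (\<phi> u - g (cone_param t u p') *\<^sub>R r) = 0"
      "lq t (\<phi> u - h (cone_param t u q) *\<^sub>R r') = 0"
      using Q u by (simp_all flip: rays)
    moreover have "f (cone_param t u p) \<noteq> g (cone_param t u p')" "h (cone_param t u q) \<noteq> 0"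
      using u(4) by (auto simp: G_def)
    ultimately have "\<phi> u = 0"
      using coherent_two_rays_imp_eq_0[OF R] by blast
    then show "u \<in> \<phi> -` {0}"
      by simp
  qed
  ultimately show ?thesis
    using interior_maximal by blast
qed

theorem lemma4p6:
  fixes \<phi> :: "real^'n::finite \<Rightarrow> real^'n" and t :: 'n
  assumes "CARD('n) \<ge> 4"
    and "continuous_on UNIV \<phi>"
    and "coherency_preserver t \<phi>"
    and "\<not> degenerate t \<phi>"
    and "\<phi> 0 = 0"
    and "\<exists>p\<in>Qset t. \<exists>p'\<in>Qset t. varphi t \<phi> 0 p \<noteq> varphi t \<phi> 0 p'"
    and "generic \<phi> 0"
  shows "inj_on (varphi t \<phi> 0) (Qset t)"
proof (rule inj_onI, rule ccontr)
  fix p p' assume Q: "p \<in> Qset t" "p' \<in> Qset t"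
    and eq: "varphi t \<phi> 0 p = varphi t \<phi> 0 p'" and "p \<noteq> p'"
  note ray = nondegenerate_varphi_0_ray[OF assms(3,2,4,5)]
  obtain q where q: "q \<in> Qset t" "varphi t \<phi> 0 q \<noteq> varphi t \<phi> 0 p"
    using assms(6) by metis
  define F where "F x s = (\<phi> (s *\<^sub>R x))$t" for x s
  have "continuous_on UNIV (F x)" for x
    unfolding F_def
    by (intro continuous_on_component continuous_on_compose2[OF assms(2)] continuous_intros) auto
  moreover have "\<exists>s. F x s \<noteq> 0" "F x 0 = 0" if "x \<in> Qset t" for x
    using ray(3)[OF that] assms(5) by (simp_all add: F_def)
  moreover have "q \<noteq> p" "q \<noteq> p'"
    using q eq by auto
  ultimately have "interior (\<phi> -` {0}) \<noteq> {}"
    using interior_zero_fiber_nonempty[OF assms(1,3) Q q(1) \<open>p \<noteq> p'\<close> _ _ ray(1)[OF Q(1)]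
        ray(1)[OF q(1)] q(2)[symmetric]] ray(2) Q q(1) eq
    by (metis F_def)
  then show False
    using assms(5,7) by (simp add: generic_def Wset_def)
qed
end
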